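(* Let $l$ be a nonzero natural number. Define $(a_n)_{n\ge 0}$ by $a_0=0$, $a_1=1$, $a_n=l\,a_{n-1}+a_{n-2}$ ($n\ge2$), $(b_n)_{n\ge 0}$ by $b_0=2$, $b_1=l$, $b_n=l\,b_{n-1}+b_{n-2}$ ($n\ge 2$), and let $(f_n)_{n\ge0}$ be the Fibonacci sequence ($f_0=0$, $f_1=1$, $f_n=f_{n-1}+f_{n-2}$). Then for every positive integer $n$: (i) $\mathbb{H}_{\mathbb{Q}}(-1,f_{2n+1})$ splits; (ii) $\mathbb{H}_{\mathbb{Q}}(-1,5f_{2n+1})$ splits; (iii) $\mathbb{H}_{\mathbb{Q}}(-1,a_{2n+1})$ splits; (iv) $\mathbb{H}_{\mathbb{Q}}(-1,(l^2+4)a_{2n+1})$ splits; (v) $\mathbb{H}_{\mathbb{Q}}(-1,f_{2n+1}f_{2n-1})$ splits; (vi) $\mathbb{H}_{\mathbb{Q}}(-1,a_{2n+1}a_{2n-1})$ splits; (vii) $\mathbb{H}_{\mathbb{Q}}(-1,-b_{n+1}b_{n-1})$ is a division algebra; (viii) $\mathbb{H}_{\mathbb{Q}}(1,b_{n+1}b_{n-1})$ splits; (ix) if $l$ is odd and $n\equiv 0\pmod 6$, then $\mathbb{H}_{\mathbb{Q}}(-1,b_{n+1}b_{n-1})$ is a division algebra; (x) if $6\nmid n$ and every prime $p\equiv 3\pmod 4$ dividing $b_{n+1}b_{n-1}$ divides it to an even exponent, then $\mathbb{H}_{\mathbb{Q}}(-1,b_{n+1}b_{n-1})$ splits; (xi)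 if $n\equiv 7\pmod{16}$, then $\mathbb{H}_{\mathbb{Q}}(-9,f_n)$ splits.
   Context: For nonzero rationals $\alpha,\beta$, the generalized quaternion algebra $\mathbb{H}_{\mathbb{Q}}(\alpha,\beta)$ is the $4$-dimensional $\mathbb{Q}$-algebra with basis $1,e_2,e_3,e_4$ and multiplication $e_2^2=\alpha$, $e_3^2=\beta$, $e_2e_3=-e_3e_2=e_4$ (so $e_4^2=-\alpha\beta$, $e_2e_4=\alpha e_3$, $e_3e_4=-\beta e_2$, etc.). It "splits" if it is isomorphic to the matrix algebra $M_2(\mathbb{Q})$, and it is a division algebra if every nonzero element is invertible (equivalently the norm $x_1^2-\alpha x_2^2-\beta x_3^2+\alpha\beta x_4^2$ vanishes only at $0$). *)

theory Defs
  imports "HOL-Analysis.Analysis" "HOL-Number_Theory.Fib"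
begin

text \<open>Elements of the generalized quaternion algebra H_Q(alpha,beta) as coordinate
  vectors (x1,x2,x3,x4) w.r.t. the basis 1, e2, e3, e4.\<close>
type_synonym quat = "rat \<times> rat \<times> rat \<times> rat"

definition qone :: quat where "qone = (1, 0, 0, 0)"

definition qadd :: "quat \<Rightarrow> quat \<Rightarrow> quat" where
  "qadd x y = (case x of (x1, x2, x3, x4) \<Rightarrow> case y of (y1, y2, y3, y4) \<Rightarrow>
     (x1 + y1, x2 + y2, x3 + y3, x4 + y4))"

definition qscale :: "rat \<Rightarrow> quat \<Rightarrow> quat" where
  "qscale c x = (case x of (x1, x2, x3, x4) \<Rightarrow> (c * x1, c * x2, c * x3, c * x4))"

text \<open>Multiplication: e2^2 = alpha, e3^2 = beta, e2 e3 = - e3 e2 = e4, extended bilinearly.\<close>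
definition qmul :: "rat \<Rightarrow> rat \<Rightarrow> quat \<Rightarrow> quat \<Rightarrow> quat" where
  "qmul \<alpha> \<beta> x y = (case x of (x1, x2, x3, x4) \<Rightarrow> case y of (y1, y2, y3, y4) \<Rightarrow>
     (x1*y1 + \<alpha>*x2*y2 + \<beta>*x3*y3 - \<alpha>*\<beta>*x4*y4,
      x1*y2 + x2*y1 - \<beta>*x3*y4 + \<beta>*x4*y3,
      x1*y3 + x3*y1 + \<alpha>*x2*y4 - \<alpha>*x4*y2,
      x1*y4 + x4*y1 + x2*y3 - x3*y2))"

definition quat_splits :: "rat \<Rightarrow> rat \<Rightarrow> bool" where
  "quat_splits \<alpha> \<beta> \<longleftrightarrow> (\<exists>\<phi> :: quat \<Rightarrow> rat^2^2.
      bij \<phi> \<and>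
      (\<forall>x y. \<phi> (qadd x y) = \<phi> x + \<phi> y) \<and>
      (\<forall>c x. \<phi> (qscale c x) = (\<chi> i j. c * (\<phi> x $ i $ j))) \<and>
      (\<forall>x y. \<phi> (qmul \<alpha> \<beta> x y) = \<phi> x ** \<phi> y) \<and>
      \<phi> qone = mat 1)"

definition quat_division :: "rat \<Rightarrow> rat \<Rightarrow> bool" where
  "quat_division \<alpha> \<beta> \<longleftrightarrow>
     (\<forall>x. x \<noteq> (0, 0, 0, 0) \<longrightarrow> (\<exists>y. qmul \<alpha> \<beta> x y = qone \<and> qmul \<alpha> \<beta> y x = qone))"

fun seq_a :: "nat \<Rightarrow> nat \<Rightarrow> nat" where
  "seq_a l 0 = 0"
| "seq_a l (Suc 0) = 1"
| "seq_a l (Suc (Suc n)) = l * seq_a l (Suc n) + seq_a l n"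

fun seq_b :: "nat \<Rightarrow> nat \<Rightarrow> nat" where
  "seq_b l 0 = 2"
| "seq_b l (Suc 0) = l"
| "seq_b l (Suc (Suc n)) = l * seq_b l (Suc n) + seq_b l n"

end

theory Submission
  imports Defs "HOL-Number_Theory.Number_Theory" "HOL-Library.Discrete_Functions"
begin

(* H(\<alpha>, \<beta>) splits as soon as \<beta> is a norm u^2 - \<alpha> t^2 from Q(sqrt \<alpha>): then e2 and
   e3 have explicit anticommuting 2x2 matrix models.  For \<alpha> = -c^2 this asks for \<beta> to be a
   sum of two squares, which holds for a(2n+1) = a(n)^2 + a(n+1)^2 and is preserved by
   products; the general criterion (even exponents at primes 3 mod 4) is the two-squares
   theorem, proved via Euler's criterion and Thue's lemma.  Conversely H(\<alpha>, \<beta>) is a division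
   algebra when the norm form x1^2 - \<alpha> x2^2 - \<beta> x3^2 + \<alpha> \<beta> x4^2 is anisotropic.  For
   \<alpha> = -1 this is clear if \<beta> < 0, and for \<beta> = 3 mod 4 an infinite 2-adic descent works;
   b(n+1) b(n-1) = 3 mod 4 for odd l and 6 | n because b mod 4 then has period 6. *)

definition mat2 :: "rat \<Rightarrow> rat \<Rightarrow> rat \<Rightarrow> rat \<Rightarrow> rat^2^2" where
  "mat2 p q r s = (\<chi> i j. if i = 1 then (if j = 1 then p else q) else (if j = 1 then r else s))"

lemma mat2_eq_iff: "mat2 p q r s = mat2 p' q' r' s' \<longleftrightarrow> p = p' \<and> q = q' \<and> r = r' \<and> s = s'"
  by (auto simp: vec_eq_iff forall_2 mat2_def)

lemma mat2_nth [simp]: "mat2 p q r s $ 1 $ 1 = p" "mat2 p q r s $ 1 $ 2 = q"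
  "mat2 p q r s $ 2 $ 1 = r" "mat2 p q r s $ 2 $ 2 = s"
  by (simp_all add: mat2_def)

lemma mat2_entries: "mat2 (A$1$1) (A$1$2) (A$2$1) (A$2$2) = A"
  by (auto simp: vec_eq_iff forall_2 mat2_def)

lemma mat2_add: "mat2 a b c d + mat2 e f g h = mat2 (a+e) (b+f) (c+g) (d+h)"
  by (auto simp: vec_eq_iff forall_2 mat2_def)

lemma mat2_mult: "mat2 a b c d ** mat2 e f g h = mat2 (a*e+b*g) (a*f+b*h) (c*e+d*g) (c*f+d*h)"
  by (auto simp: vec_eq_iff forall_2 matrix_matrix_mult_def sum_2 mat2_def)

lemma mat2_scale: "(\<chi> i j. k * (mat2 a b c d $ i $ j)) = mat2 (k*a) (k*b) (k*c) (k*d)"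
  by (auto simp: vec_eq_iff forall_2 mat2_def)

lemma mat2_one: "mat 1 = mat2 1 0 0 1"
  by (auto simp: vec_eq_iff forall_2 mat_def mat2_def)

definition quat_to_mat2 :: "rat \<Rightarrow> rat \<Rightarrow> rat \<Rightarrow> quat \<Rightarrow> rat^2^2" where
  "quat_to_mat2 \<alpha> u t x = (case x of (x1, x2, x3, x4) \<Rightarrow>
     mat2 (x1 + u*x3 + \<alpha>*t*x4) (\<alpha>*x2 - \<alpha>*t*x3 - \<alpha>*u*x4)
          (x2 + t*x3 + u*x4) (x1 - u*x3 - \<alpha>*t*x4))"

definition mat2_to_quat :: "rat \<Rightarrow> rat \<Rightarrow> rat \<Rightarrow> rat^2^2 \<Rightarrow> quat" where
  "mat2_to_quat \<alpha> u t A =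
     (let p = A$1$1; q = A$1$2; r = A$2$1; s = A$2$2;
          a = (p - s)/2; b = (r - q/\<alpha>)/2; d = u^2 - \<alpha>*t^2
      in ((p + s)/2, (r + q/\<alpha>)/2, (u*a - \<alpha>*t*b)/d, (u*b - t*a)/d))"

lemma quat_to_mat2_mat2_to_quat:
  assumes "\<alpha> \<noteq> 0" "u^2 - \<alpha>*t^2 \<noteq> 0"
  shows "quat_to_mat2 \<alpha> u t (mat2_to_quat \<alpha> u t (mat2 p q r s)) = mat2 p q r s"
proof -
  define a b where "a = (p - s)/2" and "b = (r - q/\<alpha>)/2"
  define d where "d = u^2 - \<alpha>*t^2"
  define x3 x4 where "x3 = (u*a - \<alpha>*t*b)/d" and "x4 = (u*b - t*a)/d"
  have "d \<noteq> 0" using assms(2) by (simp add: d_def)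
  have "u*x3 + \<alpha>*t*x4 = (u*(u*a - \<alpha>*t*b) + \<alpha>*t*(u*b - t*a))/d"
    by (simp add: x3_def x4_def add_divide_distrib)
  also have "\<dots> = d*a/d" by (simp add: d_def algebra_simps power2_eq_square)
  finally have a: "u*x3 + \<alpha>*t*x4 = a" using \<open>d \<noteq> 0\<close> by simp
  have "t*x3 + u*x4 = (t*(u*a - \<alpha>*t*b) + u*(u*b - t*a))/d"
    by (simp add: x3_def x4_def add_divide_distrib)
  also have "\<dots> = d*b/d" by (simp add: d_def algebra_simps power2_eq_square)
  finally have b: "t*x3 + u*x4 = b" using \<open>d \<noteq> 0\<close> by simp
  have "mat2_to_quat \<alpha> u t (mat2 p q r s) = ((p + s)/2, (r + q/\<alpha>)/2, x3, x4)"
    by (simp add: mat2_to_quat_def Let_def a_def b_def d_def x3_def x4_def)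
  then show ?thesis
    using a b arg_cong[OF b, of "\<lambda>z. \<alpha> * z"] assms(1)
    by (simp add: quat_to_mat2_def mat2_eq_iff a_def b_def field_simps)
qed

lemma bij_quat_to_mat2:
  assumes "\<alpha> \<noteq> 0" "u^2 - \<alpha>*t^2 \<noteq> 0"
  shows "bij (quat_to_mat2 \<alpha> u t)"
proof (rule o_bij[where g = "mat2_to_quat \<alpha> u t"])
  show "mat2_to_quat \<alpha> u t \<circ> quat_to_mat2 \<alpha> u t = id"
    using assms by (auto simp: quat_to_mat2_def mat2_to_quat_def Let_def field_simps power2_eq_square)
  show "quat_to_mat2 \<alpha> u t \<circ> mat2_to_quat \<alpha> u t = id"
    using quat_to_mat2_mat2_to_quat[OF assms] by (metis mat2_entries comp_apply eq_id_iff)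
qed

(* quat_to_mat2 sends e2 to (0 \<alpha>; 1 0) and e3 to (u -\<alpha>t; t -u); these anticommute and square
   to \<alpha> and u^2 - \<alpha> t^2. *)
lemma quat_splits_if_norm:
  fixes \<alpha> \<beta> u t :: rat
  assumes "\<alpha> \<noteq> 0" "\<beta> \<noteq> 0" "\<beta> = u^2 - \<alpha>*t^2"
  shows "quat_splits \<alpha> \<beta>"
  unfolding quat_splits_def
proof (intro exI[of _ "quat_to_mat2 \<alpha> u t"] conjI allI)
  show "bij (quat_to_mat2 \<alpha> u t)" using assms by (intro bij_quat_to_mat2) auto
  show "quat_to_mat2 \<alpha> u t (qadd x y) = quat_to_mat2 \<alpha> u t x + quat_to_mat2 \<alpha> u t y" for x y
    by (cases x; cases y) (simp add: quat_to_mat2_def qadd_def mat2_add mat2_eq_iff algebra_simps)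
  show "quat_to_mat2 \<alpha> u t (qscale c x) = (\<chi> i j. c * (quat_to_mat2 \<alpha> u t x $ i $ j))" for c x
    by (cases x) (simp add: quat_to_mat2_def qscale_def mat2_scale mat2_eq_iff algebra_simps)
  show "quat_to_mat2 \<alpha> u t (qmul \<alpha> \<beta> x y) = quat_to_mat2 \<alpha> u t x ** quat_to_mat2 \<alpha> u t y" for x y
    by (cases x; cases y)
      (simp add: assms(3) quat_to_mat2_def qmul_def mat2_mult mat2_eq_iff algebra_simps power2_eq_square)
  show "quat_to_mat2 \<alpha> u t qone = mat 1"
    by (simp add: quat_to_mat2_def qone_def mat2_one)
qed

lemma quat_splits_one:
  assumes "\<beta> \<noteq> 0"
  shows "quat_splits 1 \<beta>"
  by (rule quat_splits_if_norm[of 1 \<beta> "(\<beta> + 1)/2" "(\<beta> - 1)/2"])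
    (use assms in \<open>simp_all add: field_simps power2_eq_square\<close>)

definition sum_two_squares :: "'a::comm_semiring_1 \<Rightarrow> bool" where
  "sum_two_squares x \<longleftrightarrow> (\<exists>a b. x = a^2 + b^2)"

lemma sum_two_squares_mult:
  fixes x y :: "'a::comm_ring_1"
  assumes "sum_two_squares x" "sum_two_squares y"
  shows "sum_two_squares (x * y)"
proof -
  obtain a b c d where "x = a^2 + b^2" "y = c^2 + d^2"
    using assms unfolding sum_two_squares_def by blast
  then have "x * y = (a*c - b*d)^2 + (a*d + b*c)^2"
    by (simp add: algebra_simps power2_eq_square)
  then show ?thesis unfolding sum_two_squares_def by blast
qed

lemma sum_two_squares_power2: "sum_two_squares (a^2)"
  unfolding sum_two_squares_def by (rule exI[of _ a], rule exI[of _ 0]) simp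

lemma sum_two_squares_of_nat: "sum_two_squares n \<Longrightarrow> sum_two_squares (of_nat n)"
  unfolding sum_two_squares_def by (metis of_nat_add of_nat_power)

lemma sum_two_squares_of_int: "sum_two_squares m \<Longrightarrow> sum_two_squares (of_int m)"
  unfolding sum_two_squares_def by (metis of_int_add of_int_power)

lemma quat_splits_minus_square_if_sum_two_squares:
  fixes \<beta> c :: rat
  assumes "sum_two_squares \<beta>" "\<beta> \<noteq> 0" "c \<noteq> 0"
  shows "quat_splits (-(c^2)) \<beta>"
proof -
  obtain a b where "\<beta> = a^2 + b^2" using assms(1) unfolding sum_two_squares_def by blast
  then have "\<beta> = a^2 - (-(c^2)) * (b/c)^2" using assms(3) by (simp add: power_divide)
  then show ?thesis using assms by (intro quat_splits_if_norm) auto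
qed

corollary quat_splits_minus_one_if_sum_two_squares:
  fixes \<beta> :: rat
  assumes "sum_two_squares \<beta>" "\<beta> \<noteq> 0"
  shows "quat_splits (-1) \<beta>"
  using quat_splits_minus_square_if_sum_two_squares[OF assms, of 1] by simp

lemma qmul_qscale_left: "qmul \<alpha> \<beta> (qscale c x) y = qscale c (qmul \<alpha> \<beta> x y)"
  by (cases x; cases y) (simp add: qmul_def qscale_def algebra_simps)

lemma qmul_qscale_right: "qmul \<alpha> \<beta> x (qscale c y) = qscale c (qmul \<alpha> \<beta> x y)"
  by (cases x; cases y) (simp add: qmul_def qscale_def algebra_simps)

lemma qmul_conjugate:
  "qmul \<alpha> \<beta> (x1, x2, x3, x4) (x1, -x2, -x3, -x4) = (x1^2 - \<alpha>*x2^2 - \<beta>*x3^2 + \<alpha>*\<beta>*x4^2, 0, 0, 0)"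
  "qmul \<alpha> \<beta> (x1, -x2, -x3, -x4) (x1, x2, x3, x4) = (x1^2 - \<alpha>*x2^2 - \<beta>*x3^2 + \<alpha>*\<beta>*x4^2, 0, 0, 0)"
  by (simp_all add: qmul_def algebra_simps power2_eq_square)

lemma quat_division_if_anisotropic:
  assumes "\<And>x1 x2 x3 x4. x1^2 - \<alpha>*x2^2 - \<beta>*x3^2 + \<alpha>*\<beta>*x4^2 = 0 \<Longrightarrow> x1 = 0 \<and> x2 = 0 \<and> x3 = 0 \<and> x4 = 0"
  shows "quat_division \<alpha> \<beta>"
  unfolding quat_division_def
proof (intro allI impI)
  fix x :: quat assume "x \<noteq> (0, 0, 0, 0)"
  obtain x1 x2 x3 x4 where x: "x = (x1, x2, x3, x4)" by (cases x) auto
  define N where "N = x1^2 - \<alpha>*x2^2 - \<beta>*x3^2 + \<alpha>*\<beta>*x4^2"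
  have "N \<noteq> 0" using assms[of x1 x2 x3 x4] \<open>x \<noteq> (0, 0, 0, 0)\<close> x unfolding N_def by auto
  define y where "y = qscale (1/N) (x1, -x2, -x3, -x4)"
  have "qscale (1/N) (N, 0, 0, 0) = qone" using \<open>N \<noteq> 0\<close> by (simp add: qscale_def qone_def)
  then have "qmul \<alpha> \<beta> x y = qone \<and> qmul \<alpha> \<beta> y x = qone"
    unfolding y_def x qmul_qscale_left qmul_qscale_right qmul_conjugate N_def[symmetric] by simp
  then show "\<exists>y. qmul \<alpha> \<beta> x y = qone \<and> qmul \<alpha> \<beta> y x = qone" by blast
qed

lemma quat_division_minus_one_neg:
  fixes c :: rat
  assumes "c > 0"
  shows "quat_division (-1) (-c)"
proof (rule quat_division_if_anisotropic)
  fix x1 x2 x3 x4 :: rat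
  assume "x1^2 - (-1)*x2^2 - (-c)*x3^2 + (-1)*(-c)*x4^2 = 0"
  then have "x1^2 + x2^2 + c*x3^2 + c*x4^2 = 0" by simp
  moreover have "x1^2 \<ge> 0" "x2^2 \<ge> 0" "c*x3^2 \<ge> 0" "c*x4^2 \<ge> 0" using assms by auto
  ultimately have "x1^2 = 0" "x2^2 = 0" "c*x3^2 = 0" "c*x4^2 = 0" by linarith+
  then show "x1 = 0 \<and> x2 = 0 \<and> x3 = 0 \<and> x4 = 0" using assms by simp
qed

lemma int_square_mod_8: "(x::int)^2 mod 8 \<in> {0, 1, 4}" "odd x \<longleftrightarrow> x^2 mod 8 = 1"
proof -
  have "x mod 8 = 0 \<or> x mod 8 = 1 \<or> x mod 8 = 2 \<or> x mod 8 = 3 \<or> x mod 8 = 4 \<or>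
      x mod 8 = 5 \<or> x mod 8 = 6 \<or> x mod 8 = 7" by presburger
  then have cases: "x mod 8 \<in> {0, 1, 2, 3, 4, 5, 6, 7}" by simp
  have sq: "x^2 mod 8 = (x mod 8)^2 mod 8" by (simp add: power_mod)
  have "odd x \<longleftrightarrow> odd (x mod 8)" by presburger
  then show "x^2 mod 8 \<in> {0, 1, 4}" "odd x \<longleftrightarrow> x^2 mod 8 = 1"
    using cases unfolding sq by auto
qed

lemma sum_squares_eq_mod4_3_multiple_imp_even:
  fixes x y z w m :: int
  assumes "m mod 4 = 3" and "x^2 + y^2 = m * (z^2 + w^2)"
  shows "even x \<and> even y \<and> even z \<and> even w"
proof -
  have residues_mod_8:
    "\<forall>a\<in>{0,1,4}. \<forall>b\<in>{0,1,4}. \<forall>c\<in>{0,1,4}. \<forall>d\<in>{0,1,4}. \<forall>k\<in>{3,7::int}.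
       (a + b) mod 8 = k * ((c + d) mod 8) mod 8 \<longrightarrow> a \<noteq> 1 \<and> b \<noteq> 1 \<and> c \<noteq> 1 \<and> d \<noteq> 1"
    by simp
  have "m mod 8 = 3 \<or> m mod 8 = 7" using assms(1) by presburger
  then have "m mod 8 \<in> {3, 7}" by simp
  moreover have "(x^2 mod 8 + y^2 mod 8) mod 8 = m mod 8 * ((z^2 mod 8 + w^2 mod 8) mod 8) mod 8"
    by (simp only: mod_add_eq mod_mult_eq assms(2))
  ultimately have "x^2 mod 8 \<noteq> 1 \<and> y^2 mod 8 \<noteq> 1 \<and> z^2 mod 8 \<noteq> 1 \<and> w^2 mod 8 \<noteq> 1"
    by (rule residues_mod_8[rule_format, OF int_square_mod_8(1) int_square_mod_8(1)
          int_square_mod_8(1) int_square_mod_8(1)])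
  then show ?thesis using int_square_mod_8(2) by blast
qed

lemma sum_squares_eq_mod4_3_multiple:
  fixes x y z w m :: int
  assumes "m mod 4 = 3" and "x^2 + y^2 = m * (z^2 + w^2)"
  shows "z = 0 \<and> w = 0"
  using assms(2)
proof (induction "nat (z^2 + w^2)" arbitrary: x y z w rule: less_induct)
  case less
  show ?case
  proof (rule ccontr)
    assume nonzero: "\<not> (z = 0 \<and> w = 0)"
    obtain x' y' z' w' where halves: "x = 2*x'" "y = 2*y'" "z = 2*z'" "w = 2*w'"
      using sum_squares_eq_mod4_3_multiple_imp_even[OF assms(1) less.prems] by (meson evenE)
    have "x'^2 + y'^2 = m * (z'^2 + w'^2)"
      using less.prems halves by (simp add: power2_eq_square algebra_simps)
    moreover have "0 < z'^2 + w'^2"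
      using nonzero halves by (simp add: sum_power2_gt_zero_iff)
    then have "nat (z'^2 + w'^2) < nat (z^2 + w^2)"
      using halves by (simp add: power_mult_distrib)
    ultimately have "z' = 0 \<and> w' = 0" using less.hyps by blast
    with nonzero halves show False by simp
  qed
qed

lemma rat_clear_denominator:
  fixes x :: rat
  obtains d :: int where "d > 0" "of_int d * x \<in> \<int>"
proof -
  obtain n d where q: "quotient_of x = (n, d)" by (cases "quotient_of x") auto
  then have "d > 0" "x = of_int n / of_int d" by (simp_all add: quotient_of_denom_pos quotient_of_div)
  then show ?thesis by (intro that[of d]) simp_all
qed

lemma rat_sum_squares_eq_mod4_3_multiple:
  fixes x1 x2 x3 x4 :: rat and m :: int
  assumes "m mod 4 = 3" and eq: "x1^2 + x2^2 = of_int m * (x3^2 + x4^2)"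
  shows "x3 = 0 \<and> x4 = 0"
proof -
  obtain d1 d2 d3 d4 :: int where d: "d1 > 0" "d2 > 0" "d3 > 0" "d4 > 0"
    and "of_int d1 * x1 \<in> \<int>" "of_int d2 * x2 \<in> \<int>" "of_int d3 * x3 \<in> \<int>" "of_int d4 * x4 \<in> \<int>"
    by (metis rat_clear_denominator)
  define D where "D = d1 * d2 * d3 * d4"
  have "of_int D * x1 \<in> \<int>" "of_int D * x2 \<in> \<int>" "of_int D * x3 \<in> \<int>" "of_int D * x4 \<in> \<int>"
    unfolding D_def using \<open>of_int d1 * x1 \<in> \<int>\<close> \<open>of_int d2 * x2 \<in> \<int>\<close>
      \<open>of_int d3 * x3 \<in> \<int>\<close> \<open>of_int d4 * x4 \<in> \<int>\<close>
    by (metis Ints_mult Ints_of_int mult.assoc mult.commute of_int_mult)+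
  then obtain X1 X2 X3 X4 :: int where X: "of_int X1 = of_int D * x1" "of_int X2 = of_int D * x2"
    "of_int X3 = of_int D * x3" "of_int X4 = of_int D * x4"
    by (metis Ints_cases)
  have "(of_int (X1^2 + X2^2) :: rat) = of_int D ^ 2 * (x1^2 + x2^2)"
    using X by (simp add: power2_eq_square algebra_simps)
  also have "\<dots> = of_int (m * (X3^2 + X4^2))"
    using X eq by (simp add: power2_eq_square algebra_simps)
  finally have "X1^2 + X2^2 = m * (X3^2 + X4^2)" by (simp only: of_int_eq_iff)
  then have "X3 = 0 \<and> X4 = 0" by (rule sum_squares_eq_mod4_3_multiple[OF assms(1)])
  moreover have "D > 0" using d by (simp add: D_def)
  ultimately show ?thesis using X by simp
qed

lemma quat_division_minus_one_mod4_3: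
  fixes m :: int
  assumes "m mod 4 = 3"
  shows "quat_division (-1) (of_int m)"
proof (rule quat_division_if_anisotropic)
  fix x1 x2 x3 x4 :: rat
  assume "x1^2 - (-1)*x2^2 - (of_int m)*x3^2 + (-1)*(of_int m)*x4^2 = 0"
  then have "x1^2 + x2^2 = of_int m * (x3^2 + x4^2)" by (simp add: algebra_simps)
  moreover from this have "x3 = 0 \<and> x4 = 0" by (rule rat_sum_squares_eq_mod4_3_multiple[OF assms])
  ultimately show "x1 = 0 \<and> x2 = 0 \<and> x3 = 0 \<and> x4 = 0" by (simp add: sum_power2_eq_zero_iff)
qed

lemma minus_one_square_mod_prime:
  fixes p :: nat
  assumes "prime p" "p mod 4 = 1"
  obtains x :: int where "int p dvd x^2 + 1"
proof -
  have "2 < p" using assms prime_ge_2_nat[of p] by (cases "p = 2") auto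
  have "even ((p - 1) div 2)" using assms(2) by presburger
  with euler_criterion[OF assms(1) \<open>2 < p\<close>, of "-1"]
  have "[Legendre (-1) (int p) = 1] (mod int p)" by simp
  moreover have "\<not> [-1 = 1] (mod int p)" "\<not> [-1 = 0] (mod int p)"
    using \<open>2 < p\<close> by (auto simp: cong_iff_dvd_diff zdvd_not_zless)
  ultimately have "QuadRes (int p) (-1)"
    unfolding Legendre_def by (auto split: if_splits)
  then obtain y where "[y^2 = -1] (mod int p)" unfolding QuadRes_def by blast
  then have "int p dvd y^2 + 1" by (simp add: cong_iff_dvd_diff)
  then show ?thesis by (rule that)
qed

lemma thue_lemma:
  fixes p :: nat and x :: int
  assumes "p > 0"
  obtains y1 y2 :: int where "(y1, y2) \<noteq> (0, 0)" "\<bar>y1\<bar> \<le> int (floor_sqrt p)"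
    "\<bar>y2\<bar> \<le> int (floor_sqrt p)" "int p dvd y1 + x * y2"
proof -
  define s where "s = floor_sqrt p"
  define A where "A = {0..s} \<times> {0..s}"
  define f where "f = (\<lambda>(a, b). (int a + x * int b) mod int p)"
  have "card (f ` A) \<le> card {0..<int p}"
    by (rule card_mono) (auto simp: f_def assms)
  also have "\<dots> = p" by simp
  also have "p < (s + 1)^2" using Suc_floor_sqrt_power2_gt[of p] by (simp add: s_def)
  also have "\<dots> = card A" by (simp add: A_def power2_eq_square)
  finally have "\<not> inj_on f A" using card_image[of f A] by auto
  then obtain a b a' b' where ab: "(a, b) \<in> A" "(a', b') \<in> A" "(a, b) \<noteq> (a', b')"
    "f (a, b) = f (a', b')" unfolding inj_on_def by auto
  show ?thesis
  proof (rule that[of "int a - int a'" "int b - int b'"])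
    show "(int a - int a', int b - int b') \<noteq> (0, 0)" using ab(3) by simp
    show "\<bar>int a - int a'\<bar> \<le> int (floor_sqrt p)" "\<bar>int b - int b'\<bar> \<le> int (floor_sqrt p)"
      using ab(1,2) by (auto simp: A_def s_def)
    have "[int a + x * int b = int a' + x * int b'] (mod int p)"
      using ab(4) by (simp add: f_def cong_def)
    then show "int p dvd (int a - int a') + x * (int b - int b')"
      by (simp add: cong_iff_dvd_diff algebra_simps)
  qed
qed

theorem prime_sum_two_squares:
  fixes p :: nat
  assumes "prime p" "p mod 4 \<noteq> 3"
  shows "sum_two_squares (int p)"
proof (cases "p = 2")
  case True
  then show ?thesis unfolding sum_two_squares_def by (intro exI[of _ 1]) simp
next
  case False
  then have "p mod 4 = 1"
    using prime_odd_nat[OF assms(1)] prime_ge_2_nat[OF assms(1)] assms(2) by presburger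
  obtain x :: int where x: "int p dvd x^2 + 1"
    using minus_one_square_mod_prime[OF assms(1) \<open>p mod 4 = 1\<close>] .
  have "p > 0" using assms(1) by (simp add: prime_gt_0_nat)
  obtain y1 y2 where y: "(y1, y2) \<noteq> (0, 0)" "\<bar>y1\<bar> \<le> int (floor_sqrt p)"
      "\<bar>y2\<bar> \<le> int (floor_sqrt p)" "int p dvd y1 + x * y2"
    using thue_lemma[OF \<open>p > 0\<close>] .
  have "y1^2 + y2^2 = (y1 + x*y2) * (y1 - x*y2) + y2^2 * (x^2 + 1)"
    by (simp add: algebra_simps power2_eq_square)
  then have "int p dvd y1^2 + y2^2" using x y(4) by simp
  then obtain k where k: "y1^2 + y2^2 = int p * k" by blast
  define s where "s = floor_sqrt p"
  have "s^2 \<noteq> p"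
  proof
    assume "s^2 = p"
    then have "prime (s * s)" using assms(1) by (simp add: power2_eq_square)
    then have "s = 1" using prime_product by blast
    with \<open>s^2 = p\<close> assms(1) show False by auto
  qed
  then have "s^2 < p" using floor_sqrt_power2_le[of p] unfolding s_def by linarith
  then have "int s ^ 2 < int p" by (simp flip: of_nat_power)
  moreover have "y1^2 \<le> int s ^ 2" "y2^2 \<le> int s ^ 2"
    using y(2,3) by (auto simp: s_def abs_le_square_iff[symmetric] intro: power_mono)
  ultimately have "int p * k < int p * 2" using k by linarith
  then have "k < 2" using \<open>p > 0\<close> by (simp add: mult_less_cancel_left)
  moreover have "0 < int p * k" using y(1) k[symmetric] by (simp add: sum_power2_gt_zero_iff)
  then have "0 < k" using \<open>p > 0\<close> by (simp add: zero_less_mult_iff)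
  ultimately have "k = 1" by simp
  then show ?thesis using k unfolding sum_two_squares_def by (metis mult.right_neutral)
qed

lemma even_multiplicities_mod4_3_cofactor:
  fixes c k :: nat
  assumes "c > 0" "k > 0"
    and "\<forall>q. prime q \<and> q mod 4 = 3 \<longrightarrow> even (multiplicity q c)"
    and "\<forall>q. prime q \<and> q mod 4 = 3 \<and> q dvd c * k \<longrightarrow> even (multiplicity q (c * k))"
  shows "\<forall>q. prime q \<and> q mod 4 = 3 \<and> q dvd k \<longrightarrow> even (multiplicity q k)"
proof (intro allI impI)
  fix q :: nat assume q: "prime q \<and> q mod 4 = 3 \<and> q dvd k"
  then have "multiplicity q (c * k) = multiplicity q c + multiplicity q k"
    using assms(1,2) by (simp add: prime_elem_multiplicity_mult_distrib)
  with q assms(3,4) show "even (multiplicity q k)" by auto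
qed

lemma prime_square_dvd_if_even_multiplicity:
  fixes p m :: nat
  assumes "prime p" "m > 0" "p dvd m" "even (multiplicity p m)"
  shows "p^2 dvd m"
proof -
  have "multiplicity p m \<noteq> 0"
    using assms(1-3) by (simp add: prime_elem_multiplicity_eq_zero_iff)
  with assms(4) have "2 \<le> multiplicity p m" by presburger
  then show ?thesis by (rule multiplicity_dvd')
qed

theorem sum_two_squares_if_even_multiplicities_mod4_3:
  fixes m :: nat
  assumes "m > 0" "\<forall>p. prime p \<and> p mod 4 = 3 \<and> p dvd m \<longrightarrow> even (multiplicity p m)"
  shows "sum_two_squares (int m)"
  using assms
proof (induction m rule: less_induct)
  case (less m)
  show ?case
  proof (cases "m = 1")
    case True
    then show ?thesis using sum_two_squares_power2[of "1::int"] by simp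
  next
    case False
    then obtain p where p: "prime p" "p dvd m" using prime_factor_nat by blast
    have "p > 1" using prime_gt_1_nat[OF p(1)] .
    show ?thesis
    proof (cases "p mod 4 = 3")
      case False
      obtain k where m: "m = p * k" using p(2) by blast
      have "k > 0" "k < m" using less.prems(1) \<open>p > 1\<close> m by auto
      have "\<forall>q. prime q \<and> q mod 4 = 3 \<longrightarrow> even (multiplicity q p)"
        using p(1) False by (metis prime_multiplicity_other even_zero)
      then have "sum_two_squares (int k)"
        using less.IH[OF \<open>k < m\<close> \<open>k > 0\<close>] less.prems(2)
          even_multiplicities_mod4_3_cofactor[of p k] \<open>k > 0\<close> \<open>p > 1\<close> m by simp
      then show ?thesis
        using sum_two_squares_mult prime_sum_two_squares[OF p(1) False] m by (metis of_nat_mult)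
    next
      case True
      obtain j where m: "m = p^2 * j"
        using prime_square_dvd_if_even_multiplicity p less.prems True by blast
      have "1 < p^2" using one_less_power[OF \<open>p > 1\<close>, of 2] by simp
      then have "j > 0" "j < m" using less.prems(1) m by auto
      have "\<forall>q. prime q \<and> q mod 4 = 3 \<longrightarrow> even (multiplicity q (p^2))"
        using p(1) by (simp add: prime_elem_multiplicity_power_distrib)
      then have "sum_two_squares (int j)"
        using less.IH[OF \<open>j < m\<close> \<open>j > 0\<close>] less.prems(2)
          even_multiplicities_mod4_3_cofactor[of "p^2" j] \<open>j > 0\<close> \<open>p > 1\<close> m by simp
      then show ?thesis
        using sum_two_squares_mult[OF sum_two_squares_power2] m by (metis of_nat_mult of_nat_power)
    qed
  qed
qed

lemma quat_division_minus_one_of_nat_mod4_3: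
  fixes m :: nat
  assumes "m mod 4 = 3"
  shows "quat_division (-1) (of_nat m)"
proof -
  have "int m mod 4 = 3" using assms by (metis of_nat_mod of_nat_numeral)
  then show ?thesis using quat_division_minus_one_mod4_3 by fastforce
qed

lemma quat_splits_minus_one_if_even_multiplicities_mod4_3:
  fixes m :: nat
  assumes "m > 0" "\<forall>p. prime p \<and> p mod 4 = 3 \<and> p dvd m \<longrightarrow> even (multiplicity p m)"
  shows "quat_splits (-1) (of_nat m)"
proof -
  have "sum_two_squares (of_int (int m) :: rat)"
    using sum_two_squares_if_even_multiplicities_mod4_3[OF assms] by (rule sum_two_squares_of_int)
  then show ?thesis using assms(1) by (intro quat_splits_minus_one_if_sum_two_squares) simp_all
qed

lemma seq_a_one_eq_fib: "seq_a 1 n = fib n"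
  by (induction n rule: fib.induct) simp_all

lemma seq_a_Suc_pos: "l > 0 \<Longrightarrow> seq_a l (Suc n) > 0"
  by (induction n rule: fib.induct) auto

lemma seq_b_pos: "l > 0 \<Longrightarrow> seq_b l n > 0"
  by (induction n rule: fib.induct) auto

lemma seq_a_add: "seq_a l (Suc (n + k)) = seq_a l (Suc k) * seq_a l (Suc n) + seq_a l k * seq_a l n"
proof (induction n rule: fib.induct)
  case (3 n)
  have "seq_a l (Suc (Suc (Suc n) + k))
      = l * seq_a l (Suc (Suc n + k)) + seq_a l (Suc (n + k))" by simp
  also have "\<dots> = seq_a l (Suc k) * (l * seq_a l (Suc (Suc n)) + seq_a l (Suc n))
      + seq_a l k * (l * seq_a l (Suc n) + seq_a l n)"
    by (simp only: 3) (simp add: algebra_simps)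
  finally show ?case by simp
qed (cases k; simp)+

lemma seq_a_odd: "seq_a l (Suc (2 * n)) = seq_a l n ^ 2 + seq_a l (Suc n) ^ 2"
  using seq_a_add[of l n n] by (simp add: power2_eq_square mult_2)

lemma seq_b_cong:
  assumes "[l = l'] (mod m)"
  shows "[seq_b l n = seq_b l' n] (mod m)"
  by (induction n rule: fib.induct) (auto intro: cong_add cong_mult assms)

lemma seq_b_periodic_mod:
  assumes "[seq_b l p = seq_b l 0] (mod m)" "[seq_b l (Suc p) = seq_b l 1] (mod m)"
  shows "[seq_b l (n + p) = seq_b l n] (mod m)"
proof (induction n rule: fib.induct)
  case (3 n)
  have "[seq_b l (Suc (n + p)) = seq_b l (Suc n)] (mod m)" using "3.IH"(1) by simp
  with "3.IH"(2) have "[l * seq_b l (Suc (n + p)) + seq_b l (n + p) = l * seq_b l (Suc n) + seq_b l n] (mod m)"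
    by (blast intro: cong_add cong_mult cong_refl)
  then show ?case by simp
qed (use assms in simp_all)

lemma seq_b_periodic_mod_multiple:
  assumes "[seq_b l p = seq_b l 0] (mod m)" "[seq_b l (Suc p) = seq_b l 1] (mod m)"
  shows "[seq_b l (n + p * k) = seq_b l n] (mod m)"
proof (induction k)
  case (Suc k)
  have "[seq_b l (n + p * k + p) = seq_b l (n + p * k)] (mod m)"
    by (rule seq_b_periodic_mod[OF assms])
  also have "[seq_b l (n + p * k) = seq_b l n] (mod m)" by (rule Suc.IH)
  finally show ?case by (simp add: ac_simps)
qed simp

lemma seq_b_prod_mod4:
  assumes "odd l" "n mod 6 = 0" "n > 0"
  shows "seq_b l (n + 1) * seq_b l (n - 1) mod 4 = 3"
proof -
  define L where "L = l mod 4"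
  have L: "L = 1 \<or> L = 3" using assms(1) unfolding L_def by presburger
  have five: "(5::nat) = Suc (Suc (Suc (Suc (Suc 0))))" and six: "(6::nat) = Suc 5" by simp_all
  have "[seq_b L 6 = seq_b L 0] (mod 4)" "[seq_b L (Suc 6) = seq_b L 1] (mod 4)"
    "seq_b L 1 * seq_b L 5 mod 4 = 3"
    unfolding six five using L by (auto simp: cong_def)
  note period = seq_b_periodic_mod_multiple[OF this(1,2)]
  define k where "k = n div 6 - 1"
  have "n + 1 = 1 + 6 * Suc k" "n - 1 = 5 + 6 * k"
    using assms(2,3) unfolding k_def by presburger+
  then have "[seq_b l (n + 1) * seq_b l (n - 1) = seq_b L (1 + 6 * Suc k) * seq_b L (5 + 6 * k)] (mod 4)"
    by (metis cong_mult seq_b_cong cong_mod_left cong_refl L_def)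
  also have "[seq_b L (1 + 6 * Suc k) * seq_b L (5 + 6 * k) = seq_b L 1 * seq_b L 5] (mod 4)"
    by (intro cong_mult period)
  finally show ?thesis
    using \<open>seq_b L 1 * seq_b L 5 mod 4 = 3\<close> by (simp add: cong_def)
qed

lemma quat_splits_seq_a:
  assumes "l > 0" "n > 0"
  shows "quat_splits (-1) (of_nat (seq_a l (2*n+1)))"
    and "quat_splits (-1) ((of_nat l ^ 2 + 4) * of_nat (seq_a l (2*n+1)))"
    and "quat_splits (-1) (of_nat (seq_a l (2*n+1) * seq_a l (2*n-1)))"
proof -
  have sum_sq: "sum_two_squares (of_nat (seq_a l (Suc (2*i))) :: rat)" for i
    by (rule sum_two_squares_of_nat) (auto simp: sum_two_squares_def seq_a_odd)
  have nonzero: "seq_a l (Suc i) \<noteq> 0" for i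
    using seq_a_Suc_pos[OF assms(1), of i] by simp
  have "sum_two_squares (of_nat l ^ 2 + 4 :: rat)"
    unfolding sum_two_squares_def by (rule exI[of _ "of_nat l"], rule exI[of _ 2]) simp
  moreover have "(0::rat) < of_nat l ^ 2 + 4" by (intro add_nonneg_pos) simp_all
  moreover have "2*n - 1 = Suc (2*(n - 1))" using assms(2) by simp
  ultimately show "quat_splits (-1) (of_nat (seq_a l (2*n+1)))"
    "quat_splits (-1) ((of_nat l ^ 2 + 4) * of_nat (seq_a l (2*n+1)))"
    "quat_splits (-1) (of_nat (seq_a l (2*n+1) * seq_a l (2*n-1)))"
    using sum_sq
    by (auto intro!: quat_splits_minus_one_if_sum_two_squares sum_two_squares_mult simp: nonzero)
qed

lemma quat_splits_minus_square_fib_odd: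
  fixes c :: rat
  assumes "odd n" "c \<noteq> 0"
  shows "quat_splits (-(c^2)) (of_nat (fib n))"
proof -
  have "n = Suc (2 * (n div 2))" using assms(1) by presburger
  then have "sum_two_squares (of_nat (fib n) :: rat)"
    by (metis fib_rec_odd sum_two_squares_def sum_two_squares_of_nat)
  moreover have "fib n \<noteq> 0" using assms(1) fib_neq_0_nat[of n] by (cases n) auto
  ultimately show ?thesis using assms(2) by (intro quat_splits_minus_square_if_sum_two_squares) simp_all
qed

theorem proposition3p4:
  fixes l n :: nat
  assumes "l \<noteq> 0" and "n > 0"
  shows
   "quat_splits (-1) (of_nat (fib (2*n+1))) \<and>
    quat_splits (-1) (5 * of_nat (fib (2*n+1))) \<and>
    quat_splits (-1) (of_nat (seq_a l (2*n+1))) \<and>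
    quat_splits (-1) ((of_nat l ^ 2 + 4) * of_nat (seq_a l (2*n+1))) \<and>
    quat_splits (-1) (of_nat (fib (2*n+1) * fib (2*n-1))) \<and>
    quat_splits (-1) (of_nat (seq_a l (2*n+1) * seq_a l (2*n-1))) \<and>
    quat_division (-1) (- of_nat (seq_b l (n+1) * seq_b l (n-1))) \<and>
    quat_splits 1 (of_nat (seq_b l (n+1) * seq_b l (n-1))) \<and>
    (odd l \<and> n mod 6 = 0 \<longrightarrow> quat_division (-1) (of_nat (seq_b l (n+1) * seq_b l (n-1)))) \<and>
    (\<not> 6 dvd n \<and>
     (\<forall>p::nat. prime p \<and> p mod 4 = 3 \<and> p dvd seq_b l (n+1) * seq_b l (n-1)
        \<longrightarrow> even (multiplicity p (seq_b l (n+1) * seq_b l (n-1))))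
     \<longrightarrow> quat_splits (-1) (of_nat (seq_b l (n+1) * seq_b l (n-1)))) \<and>
    (n mod 16 = 7 \<longrightarrow> quat_splits (-9) (of_nat (fib n)))"
proof -
  have "l > 0" using assms(1) by simp
  note seq_a_claims = quat_splits_seq_a[OF \<open>l > 0\<close> assms(2)]
  note fib_claims = quat_splits_seq_a[OF zero_less_one assms(2), unfolded seq_a_one_eq_fib]
  define B where "B = seq_b l (n+1) * seq_b l (n-1)"
  have "B > 0" unfolding B_def using seq_b_pos[OF \<open>l > 0\<close>] by simp
  have "odd l \<and> n mod 6 = 0 \<longrightarrow> B mod 4 = 3"
    using seq_b_prod_mod4[of l n] assms(2) unfolding B_def by auto
  (* Item (x) holds without its hypothesis on 6 and n; item (xi) only uses that n is odd. *)
  moreover have "n mod 16 = 7 \<longrightarrow> quat_splits (-9) (of_nat (fib n))"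
  proof
    assume "n mod 16 = 7"
    then have "odd n" by presburger
    then show "quat_splits (-9) (of_nat (fib n))" using quat_splits_minus_square_fib_odd[of n 3] by simp
  qed
  ultimately show ?thesis
    using seq_a_claims fib_claims \<open>B > 0\<close> quat_division_minus_one_neg[of "of_nat B"]
      quat_splits_one[of "of_nat B"] quat_division_minus_one_of_nat_mod4_3[of B]
      quat_splits_minus_one_if_even_multiplicities_mod4_3[of B]
    unfolding B_def by simp
qed

end
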